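(* Let $L\geq1$ be an integer, $P\geq0$, $p_B\in[0,1]$, $\tau_{\max}>0$, $D$ an integer with $D\geq\lceil\tau_{\max}\rceil+1$, and fix delays $\boldsymbol\tau\in[0,\tau_{\max}]^L$ with $\tau_l=d_l+\delta_l$, $d_l\in\mathbb{N}$, $\delta_l\in[0,1)$. Let $\beta_1,\ldots,\beta_L$ be i.i.d. with $\mathbb{P}(\beta_l=0)=p_B$, $\mathbb{P}(\beta_l=1)=1-p_B$; $\theta_1,\ldots,\theta_L$ i.i.d. $\mathrm{Uniform}(0,2\pi)$; and, for each $K\geq1$, $\{\phi_{l,k}\}_{l\in\{1,\ldots,L\},k\in\{0,\ldots,K-1\}}$ i.i.d. $\mathrm{Uniform}(0,2\pi)$; all mutually independent. For $k\in\{0,\ldots,K-1\}$ let $G_l[k]:=(1-\delta_l)+\delta_le^{-j2\pi k/K}$, $H_l[k]:=\beta_le^{j(\theta_l-2\pi kd_l/K)}G_l[k]$, $$R_k:=\log\Big(1+\Big|\sum_{l=1}^LH_l[k]e^{j\phi_{l,k}}\Big|^2P\Big),$$ and for $\mathbf{b}\in\{0,1\}^L$ $$\bar R_k(\mathbf{b}):=\mathbb{E}\Big[\log\Big(1+\Big|\textstyle\sum_{l=1}^Lb_le^{j\vartheta_l}G_l[k]\Big|^2P\Big)\Big],$$ where $\vartheta_1,\ldots,\vartheta_L$ are i.i.d. $\mathrm{Uniform}(0,2\pi)$. Then for every $\epsilon>0$, $$\lim_{K\to\infty}\mathbb{P}\Big(\Big|\frac{1}{K+D}\sum_{k=0}^{K-1}\big(R_k-\bar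 R_k(\boldsymbol\beta)\big)\Big|\geq\epsilon\Big)=0.$$
   Context: This concerns OFDM-based non-coherent joint transmission with phase diversity applied in the frequency domain (transmitter $l$ multiplies subcarrier $k$ by $e^{j\phi_{l,k}}$) under residual timing offsets, with triangular effective pulse; $R_k$ is the instantaneous rate on subcarrier $k$. $D$ is fixed as $K$ varies. $\log$ is the logarithm in a fixed base. *)

theory Defs
  imports "HOL-Probability.Probability"
begin

text \<open>Transmitter indices l range over {1..L}; subcarrier indices k over {0..<K}.
  A sample point is (beta, theta, phi), with beta l = True meaning beta_l = 1.\<close>

definition unif2pi :: "real measure" where
  "unif2pi = uniform_measure lborel {0..2*pi}"

definition beta_measure :: "nat \<Rightarrow> real \<Rightarrow> (nat \<Rightarrow> bool) measure" where
  "beta_measure L pB = (PiM {1..L} (\<lambda>l. measure_pmf (bernoulli_pmf (1 - pB))))"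

definition theta_measure :: "nat \<Rightarrow> (nat \<Rightarrow> real) measure" where
  "theta_measure L = (PiM {1..L} (\<lambda>l. unif2pi))"

definition phi_measure :: "nat \<Rightarrow> nat \<Rightarrow> (nat \<times> nat \<Rightarrow> real) measure" where
  "phi_measure L K = (PiM ({1..L} \<times> {0..<K}) (\<lambda>lk. unif2pi))"

definition joint_measure ::
  "nat \<Rightarrow> real \<Rightarrow> nat \<Rightarrow> ((nat \<Rightarrow> bool) \<times> (nat \<Rightarrow> real) \<times> (nat \<times> nat \<Rightarrow> real)) measure" where
  "joint_measure L pB K = beta_measure L pB \<Otimes>\<^sub>M (theta_measure L \<Otimes>\<^sub>M phi_measure L K)"

definition Gk :: "(nat \<Rightarrow> real) \<Rightarrow> nat \<Rightarrow> nat \<Rightarrow> nat \<Rightarrow> complex" where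
  "Gk \<delta> K l k = complex_of_real (1 - \<delta> l) + complex_of_real (\<delta> l) * cis (- 2 * pi * real k / real K)"

definition Hk :: "(nat \<Rightarrow> nat) \<Rightarrow> (nat \<Rightarrow> real) \<Rightarrow> nat \<Rightarrow> (nat \<Rightarrow> bool) \<Rightarrow> (nat \<Rightarrow> real)
    \<Rightarrow> nat \<Rightarrow> nat \<Rightarrow> complex" where
  "Hk d \<delta> K \<beta> \<theta> l k = (if \<beta> l then 1 else 0) * cis (\<theta> l - 2 * pi * real k * real (d l) / real K) * Gk \<delta> K l k"

definition Rk :: "real \<Rightarrow> real \<Rightarrow> nat \<Rightarrow> (nat \<Rightarrow> nat) \<Rightarrow> (nat \<Rightarrow> real) \<Rightarrow> nat
    \<Rightarrow> (nat \<Rightarrow> bool) \<Rightarrow> (nat \<Rightarrow> real) \<Rightarrow> (nat \<times> nat \<Rightarrow> real) \<Rightarrow> nat \<Rightarrow> real" where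
  "Rk b P L d \<delta> K \<beta> \<theta> \<phi> k =
     log b (1 + (cmod (\<Sum>l\<in>{1..L}. Hk d \<delta> K \<beta> \<theta> l k * cis (\<phi> (l, k))))\<^sup>2 * P)"

definition Rbar :: "real \<Rightarrow> real \<Rightarrow> nat \<Rightarrow> (nat \<Rightarrow> real) \<Rightarrow> nat \<Rightarrow> (nat \<Rightarrow> bool) \<Rightarrow> nat \<Rightarrow> real" where
  "Rbar b P L \<delta> K bb k =
     (\<integral>\<psi>. log b (1 + (cmod (\<Sum>l\<in>{1..L}. (if bb l then 1 else 0) * cis (\<psi> l) * Gk \<delta> K l k))\<^sup>2 * P)
        \<partial>(theta_measure L))"

end

theory Submission
  imports Defs "HOL-Real_Asymp.Real_Asymp"
begin

text \<open>Fix the blockage pattern beta and the phases theta. The rate R_k depends on phi only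
  through the phases phi(l, k) of subcarrier k, so the summands R_k - Rbar_k(beta) are independent
  over k; they are bounded by log(1 + L^2 P) in absolute value; and they are centred, because a
  uniform phase shifted by the constant theta_l - 2 pi k d_l / K is still uniform modulo 2 pi.
  Chebyshev's inequality bounds the conditional deviation probability by
  K log^2(1 + L^2 P) / (epsilon (K + D))^2, uniformly in (beta, theta); integrating over
  (beta, theta) keeps the bound, and it tends to 0.\<close>

lemma sets_unif2pi [measurable_cong]: "sets unif2pi = sets borel"
  by (simp add: unif2pi_def)

lemma prob_space_unif2pi: "prob_space unif2pi"
  unfolding unif2pi_def by (rule prob_space_uniform_measure) auto

lemma borel_measurable_cis [measurable]: "cis \<in> borel_measurable borel"
  by (intro borel_measurable_continuous_onI continuous_intros)

lemma nn_integral_unif2pi: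
  assumes [measurable]: "h \<in> borel_measurable borel"
  shows "(\<integral>\<^sup>+x. h x \<partial>unif2pi) = (\<integral>\<^sup>+x. h x * indicator {0..<2*pi} x \<partial>lborel) / emeasure lborel {0..2*pi}"
proof -
  have "AE x in lborel. h x * indicator {0..2*pi} x = h x * indicator {0..<2*pi} x"
    using AE_lborel_singleton[of "2*pi"] by eventually_elim (auto simp: indicator_def)
  then show ?thesis
    unfolding unif2pi_def by (simp add: nn_integral_uniform_measure cong: nn_integral_cong_AE)
qed

lemma nn_integral_lborel_shift:
  fixes g :: "real \<Rightarrow> ennreal"
  assumes [measurable]: "g \<in> borel_measurable borel"
  shows "(\<integral>\<^sup>+x. g (x + c) \<partial>lborel) = (\<integral>\<^sup>+x. g x \<partial>lborel)"
  using nn_integral_real_affine[of g 1 c] by (simp add: add.commute)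

lemma nn_integral_interval_cis_shift:
  assumes [measurable]: "h \<in> borel_measurable borel" and c: "0 \<le> c" "c < 2*pi"
  shows "(\<integral>\<^sup>+x. h (cis (x + c)) * indicator {0..<2*pi} x \<partial>lborel)
       = (\<integral>\<^sup>+x. h (cis x) * indicator {0..<2*pi} x \<partial>lborel)"
proof -
  let ?g = "\<lambda>A x. h (cis x) * indicator A x"
  have cis_period: "cis (x + (c - 2*pi)) = cis (x + c)" for x
    using cis_divide[of "x + c" "2*pi"] by (simp add: add_diff_eq)
  \<comment> \<open>rotation by c maps [0, 2pi - c) onto [c, 2pi) and wraps [2pi - c, 2pi) around onto [0, c)\<close>
  have "(\<integral>\<^sup>+x. h (cis (x + c)) * indicator {0..<2*pi} x \<partial>lborel)
      = (\<integral>\<^sup>+x. ?g {c..<2*pi} (x + c) + ?g {0..<c} (x + (c - 2*pi)) \<partial>lborel)"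
    using c by (intro nn_integral_cong) (auto simp: indicator_def cis_period)
  also have "\<dots> = (\<integral>\<^sup>+x. ?g {c..<2*pi} (x + c) \<partial>lborel) + (\<integral>\<^sup>+x. ?g {0..<c} (x + (c - 2*pi)) \<partial>lborel)"
    by (rule nn_integral_add) measurable
  also have "\<dots> = (\<integral>\<^sup>+x. ?g {c..<2*pi} x \<partial>lborel) + (\<integral>\<^sup>+x. ?g {0..<c} x \<partial>lborel)"
    by (subst (1 2) nn_integral_lborel_shift) measurable
  also have "\<dots> = (\<integral>\<^sup>+x. ?g {c..<2*pi} x + ?g {0..<c} x \<partial>lborel)"
    by (simp add: nn_integral_add)
  also have "\<dots> = (\<integral>\<^sup>+x. h (cis x) * indicator {0..<2*pi} x \<partial>lborel)"
    using c by (intro nn_integral_cong) (auto simp: indicator_def)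
  finally show ?thesis .
qed

lemma nn_integral_unif2pi_cis_shift:
  assumes [measurable]: "h \<in> borel_measurable borel"
  shows "(\<integral>\<^sup>+x. h (cis (x + c)) \<partial>unif2pi) = (\<integral>\<^sup>+x. h (cis x) \<partial>unif2pi)"
proof -
  define c' where "c' = 2*pi * frac (c / (2*pi))"
  have c': "0 \<le> c'" "c' < 2*pi"
    unfolding c'_def by (simp_all add: frac_lt_1)
  have "c = c' + 2*pi * of_int \<lfloor>c / (2*pi)\<rfloor>"
    unfolding c'_def frac_def by (simp add: algebra_simps)
  then have "cis (x + c) = cis (x + c') * cis (2*pi * of_int \<lfloor>c / (2*pi)\<rfloor>)" for x
    by (metis cis_mult add.assoc)
  then have "cis (x + c) = cis (x + c')" for x
    by simp
  then show ?thesis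
    by (simp add: nn_integral_unif2pi nn_integral_interval_cis_shift[OF _ c'])
qed

lemma distr_unif2pi_cis_shift: "distr unif2pi borel (\<lambda>x. cis (x + c)) = distr unif2pi borel cis"
proof (rule measure_eqI)
  fix A :: "complex set"
  assume "A \<in> sets (distr unif2pi borel (\<lambda>x. cis (x + c)))"
  then have [measurable]: "A \<in> sets borel" by simp
  have emeasure_distr_unif2pi: "emeasure (distr unif2pi borel f) A = (\<integral>\<^sup>+x. indicator A (f x) \<partial>unif2pi)"
    if [measurable]: "f \<in> borel_measurable borel" for f :: "real \<Rightarrow> complex"
    by (simp flip: nn_integral_indicator add: nn_integral_distr)
  show "emeasure (distr unif2pi borel (\<lambda>x. cis (x + c))) A = emeasure (distr unif2pi borel cis) A"
    by (simp add: emeasure_distr_unif2pi nn_integral_unif2pi_cis_shift)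
qed simp

lemma indep_vars_PiM_components:
  assumes M: "\<And>i. i \<in> I \<Longrightarrow> prob_space (M i)"
  shows "prob_space.indep_vars (PiM I M) M (\<lambda>i \<omega>. \<omega> i) I"
proof -
  interpret prob_space "PiM I M" using M by (rule prob_space_PiM)
  show ?thesis
  proof (cases "I = {}")
    case True
    then show ?thesis unfolding indep_vars_def indep_sets_def by simp
  next
    case False
    have "distr (PiM I M) (PiM I M) (\<lambda>\<omega>. \<lambda>i\<in>I. \<omega> i) = PiM I M"
      by (subst distr_cong[of _ _ _ _ _ "\<lambda>\<omega>. \<omega>"]) (auto simp: space_PiM)
    also have "\<dots> = PiM I (\<lambda>i. distr (PiM I M) (M i) (\<lambda>\<omega>. \<omega> i))"
      by (rule PiM_cong) (auto simp: distr_PiM_component M)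
    finally show ?thesis
      by (subst indep_vars_iff_distr_eq_PiM'[OF False]) auto
  qed
qed

lemma indep_vars_PiM_blocks:
  assumes M: "\<And>i. i \<in> I \<Longrightarrow> prob_space (M i)"
    and J: "\<And>k. k \<in> K \<Longrightarrow> J k \<subseteq> I" "disjoint_family_on J K"
    and f: "\<And>k. k \<in> K \<Longrightarrow> f k \<in> measurable (PiM (J k) M) (N k)"
  shows "prob_space.indep_vars (PiM I M) N (\<lambda>k \<omega>. f k (restrict \<omega> (J k))) K"
proof -
  interpret prob_space "PiM I M" using M by (rule prob_space_PiM)
  have "indep_vars (\<lambda>k. PiM (J k) M) (\<lambda>k \<omega>. restrict \<omega> (J k)) K"
    using indep_vars_restrict[OF indep_vars_PiM_components[OF M] J] by simp
  then show ?thesis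
    using f by (rule indep_vars_compose2)
qed

lemma distr_PiM_componentwise:
  assumes M: "\<And>i. i \<in> I \<Longrightarrow> prob_space (M i)"
    and f: "\<And>i. i \<in> I \<Longrightarrow> f i \<in> measurable (M i) (N i)"
    and "I \<noteq> {}"
  shows "distr (PiM I M) (PiM I N) (\<lambda>\<omega>. \<lambda>i\<in>I. f i (\<omega> i)) = PiM I (\<lambda>i. distr (M i) (N i) (f i))"
proof -
  interpret prob_space "PiM I M" using M by (rule prob_space_PiM)
  have "indep_vars N (\<lambda>i \<omega>. f i (\<omega> i)) I"
    using indep_vars_PiM_components[OF M] f by (rule indep_vars_compose2)
  then have "distr (PiM I M) (PiM I N) (\<lambda>\<omega>. \<lambda>i\<in>I. f i (\<omega> i))
      = PiM I (\<lambda>i. distr (PiM I M) (N i) (\<lambda>\<omega>. f i (\<omega> i)))"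
    by (subst (asm) indep_vars_iff_distr_eq_PiM'[OF \<open>I \<noteq> {}\<close>]) (use f in auto)
  also have "\<dots> = PiM I (\<lambda>i. distr (M i) (N i) (f i))"
  proof (rule PiM_cong)
    fix i assume i: "i \<in> I"
    have "distr (PiM I M) (N i) (\<lambda>\<omega>. f i (\<omega> i)) = distr (distr (PiM I M) (M i) (\<lambda>\<omega>. \<omega> i)) (N i) (f i)"
      using i f by (subst distr_distr) (auto simp: comp_def)
    then show "distr (PiM I M) (N i) (\<lambda>\<omega>. f i (\<omega> i)) = distr (M i) (N i) (f i)"
      using i by (simp add: distr_PiM_component M)
  qed simp
  finally show ?thesis .
qed

lemma distr_PiM_unif2pi_cis_shift:
  assumes "I \<noteq> {}"
  shows "distr (PiM I (\<lambda>_. unif2pi)) (PiM I (\<lambda>_. borel)) (\<lambda>\<psi>. \<lambda>i\<in>I. cis (\<psi> i + c i))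
       = distr (PiM I (\<lambda>_. unif2pi)) (PiM I (\<lambda>_. borel)) (\<lambda>\<psi>. \<lambda>i\<in>I. cis (\<psi> i))"
  using distr_PiM_componentwise[OF prob_space_unif2pi _ assms, of "\<lambda>i x. cis (x + c i)" "\<lambda>_. borel"]
    distr_PiM_componentwise[OF prob_space_unif2pi _ assms, of "\<lambda>i. cis" "\<lambda>_. borel"]
  by (simp add: distr_unif2pi_cis_shift)

lemma (in prob_space) expectation_square_sum_indep:
  fixes Y :: "'i \<Rightarrow> 'a \<Rightarrow> real"
  assumes "finite I" and indep: "indep_vars (\<lambda>_. borel) Y I"
    and bounded: "\<And>i \<omega>. i \<in> I \<Longrightarrow> \<omega> \<in> space M \<Longrightarrow> \<bar>Y i \<omega>\<bar> \<le> C"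
    and centred: "\<And>i. i \<in> I \<Longrightarrow> expectation (Y i) = 0"
  shows "expectation (\<lambda>\<omega>. (\<Sum>i\<in>I. Y i \<omega>)\<^sup>2) = (\<Sum>i\<in>I. expectation (\<lambda>\<omega>. (Y i \<omega>)\<^sup>2))"
proof -
  have [measurable]: "Y i \<in> borel_measurable M" if "i \<in> I" for i
    using indep that by (auto simp: indep_vars_def)
  have integrable_Y: "integrable M (Y i)" if "i \<in> I" for i
    using bounded that by (intro integrable_const_bound[where B = C]) auto
  have integrable_YY: "integrable M (\<lambda>\<omega>. Y i \<omega> * Y j \<omega>)" if "i \<in> I" "j \<in> I" for i j
  proof (rule integrable_const_bound[where B = "C * C"])
    show "AE \<omega> in M. norm (Y i \<omega> * Y j \<omega>) \<le> C * C"
      using bounded that by (auto simp: abs_mult intro!: mult_mono order.trans[OF abs_ge_zero])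
  qed (use that in measurable)
  have orthogonal: "expectation (\<lambda>\<omega>. Y i \<omega> * Y j \<omega>) = 0" if "i \<in> I" "j \<in> I" "i \<noteq> j" for i j
  proof -
    have "indep_vars (\<lambda>_. borel) Y {i, j}"
      by (rule indep_vars_subset[OF indep]) (use that in auto)
    then have "expectation (\<lambda>\<omega>. \<Prod>l\<in>{i, j}. Y l \<omega>) = (\<Prod>l\<in>{i, j}. expectation (Y l))"
      using that integrable_Y by (intro indep_vars_lebesgue_integral) auto
    then show ?thesis
      using that centred by simp
  qed
  have "expectation (\<lambda>\<omega>. (\<Sum>i\<in>I. Y i \<omega>)\<^sup>2) = (\<Sum>i\<in>I. \<Sum>j\<in>I. expectation (\<lambda>\<omega>. Y i \<omega> * Y j \<omega>))"
    by (simp add: power2_eq_square sum_product integrable_YY integrable_sum)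
  also have "\<dots> = (\<Sum>i\<in>I. expectation (\<lambda>\<omega>. Y i \<omega> * Y i \<omega>))"
    using \<open>finite I\<close> by (intro sum.cong refl, subst sum.remove) (auto intro!: sum.neutral orthogonal)
  finally show ?thesis
    by (simp add: power2_eq_square)
qed

lemma (in prob_space) prob_abs_sum_indep_ge:
  fixes Y :: "'i \<Rightarrow> 'a \<Rightarrow> real"
  assumes "finite I" and indep: "indep_vars (\<lambda>_. borel) Y I"
    and bounded: "\<And>i \<omega>. i \<in> I \<Longrightarrow> \<omega> \<in> space M \<Longrightarrow> \<bar>Y i \<omega>\<bar> \<le> C"
    and centred: "\<And>i. i \<in> I \<Longrightarrow> expectation (Y i) = 0"
    and "e > 0"
  shows "prob {\<omega> \<in> space M. e \<le> \<bar>\<Sum>i\<in>I. Y i \<omega>\<bar>} \<le> real (card I) * C\<^sup>2 / e\<^sup>2"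
proof -
  define S where "S = (\<lambda>\<omega>. \<Sum>i\<in>I. Y i \<omega>)"
  have [measurable]: "Y i \<in> borel_measurable M" if "i \<in> I" for i
    using indep that by (auto simp: indep_vars_def)
  have [measurable]: "S \<in> borel_measurable M"
    unfolding S_def by measurable
  have square_bounded: "x\<^sup>2 \<le> B\<^sup>2" if "\<bar>x\<bar> \<le> B" for x B :: real
    using power_mono[OF that abs_ge_zero, of 2] by simp
  have "\<bar>S \<omega>\<bar> \<le> real (card I) * C" if "\<omega> \<in> space M" for \<omega>
  proof -
    have "\<bar>S \<omega>\<bar> \<le> (\<Sum>i\<in>I. \<bar>Y i \<omega>\<bar>)"
      unfolding S_def by (rule sum_abs)
    also have "\<dots> \<le> (\<Sum>i\<in>I. C)"
      using bounded that by (intro sum_mono) auto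
    finally show ?thesis by simp
  qed
  then have integrable_S2: "integrable M (\<lambda>\<omega>. (S \<omega>)\<^sup>2)"
    by (intro integrable_const_bound[where B = "(real (card I) * C)\<^sup>2"]) (auto intro: square_bounded)
  have Y2_le: "expectation (\<lambda>\<omega>. (Y i \<omega>)\<^sup>2) \<le> C\<^sup>2" if "i \<in> I" for i
  proof (rule integral_le_const)
    show "integrable M (\<lambda>\<omega>. (Y i \<omega>)\<^sup>2)"
      using that bounded by (intro integrable_const_bound[where B = "C\<^sup>2"]) (auto intro: square_bounded)
  qed (use that bounded square_bounded in auto)
  have "expectation S = 0"
    unfolding S_def using bounded centred
    by (subst Bochner_Integration.integral_sum) (auto intro!: integrable_const_bound[where B = C])
  then have "variance S = expectation (\<lambda>\<omega>. (S \<omega>)\<^sup>2)"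
    by simp
  also have "\<dots> = (\<Sum>i\<in>I. expectation (\<lambda>\<omega>. (Y i \<omega>)\<^sup>2))"
    unfolding S_def by (rule expectation_square_sum_indep[OF assms(1-4)])
  also have "\<dots> \<le> real (card I) * C\<^sup>2"
    using sum_mono[of I _ "\<lambda>_. C\<^sup>2", OF Y2_le] by simp
  finally have "variance S / e\<^sup>2 \<le> real (card I) * C\<^sup>2 / e\<^sup>2"
    by (simp add: divide_right_mono)
  moreover have "prob {\<omega> \<in> space M. e \<le> \<bar>S \<omega>\<bar>} \<le> variance S / e\<^sup>2"
    using Chebyshev_inequality[OF _ integrable_S2 \<open>e > 0\<close>] \<open>expectation S = 0\<close> by simp
  ultimately show ?thesis
    unfolding S_def by linarith
qed

lemma prob_space_beta_measure: "prob_space (beta_measure L pB)"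
  unfolding beta_measure_def by (rule prob_space_PiM) (rule prob_space_measure_pmf)

lemma prob_space_theta_measure: "prob_space (theta_measure L)"
  unfolding theta_measure_def by (rule prob_space_PiM) (rule prob_space_unif2pi)

lemma prob_space_phi_measure: "prob_space (phi_measure L K)"
  unfolding phi_measure_def by (rule prob_space_PiM) (rule prob_space_unif2pi)

text \<open>The rate on subcarrier k as a function of the unit phasors w_l multiplying G_l[k]:
  R_k takes w_l = e^{j(phi(l, k) + theta_l - 2 pi k d_l / K)}, Rbar_k takes w_l = e^{j vartheta_l}.\<close>

definition phasor_rate ::
    "real \<Rightarrow> real \<Rightarrow> nat \<Rightarrow> (nat \<Rightarrow> real) \<Rightarrow> nat \<Rightarrow> (nat \<Rightarrow> bool) \<Rightarrow> nat \<Rightarrow> (nat \<Rightarrow> complex) \<Rightarrow> real" where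
  "phasor_rate b P L \<delta> K bb k w =
     log b (1 + (cmod (\<Sum>l\<in>{1..L}. (if bb l then 1 else 0) * w l * Gk \<delta> K l k))\<^sup>2 * P)"

lemma phasor_rate_cong:
  "(\<And>l. l \<in> {1..L} \<Longrightarrow> w l = w' l) \<Longrightarrow> phasor_rate b P L \<delta> K bb k w = phasor_rate b P L \<delta> K bb k w'"
  unfolding phasor_rate_def by (metis (no_types, lifting) sum.cong)

lemma borel_measurable_phasor_rate [measurable]:
  "phasor_rate b P L \<delta> K bb k \<in> borel_measurable (PiM {1..L} (\<lambda>_. borel))"
  unfolding phasor_rate_def by measurable

lemma norm_Gk_le_1:
  assumes "0 \<le> \<delta> l" "\<delta> l \<le> 1"
  shows "cmod (Gk \<delta> K l k) \<le> 1"
proof -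
  have "cmod (Gk \<delta> K l k) \<le> cmod (complex_of_real (1 - \<delta> l)) + cmod (complex_of_real (\<delta> l) * cis (- 2 * pi * real k / real K))"
    unfolding Gk_def by (rule norm_triangle_ineq)
  also have "\<dots> = 1"
    using assms by (simp add: norm_mult del: of_real_diff)
  finally show ?thesis .
qed

lemma phasor_rate_bounds:
  assumes "P \<ge> 0" "b > 1" "\<forall>l\<in>{1..L}. 0 \<le> \<delta> l \<and> \<delta> l \<le> 1" "\<forall>l\<in>{1..L}. cmod (w l) \<le> 1"
  shows "0 \<le> phasor_rate b P L \<delta> K bb k w"
    and "phasor_rate b P L \<delta> K bb k w \<le> log b (1 + (real L)\<^sup>2 * P)"
proof -
  let ?S = "\<Sum>l\<in>{1..L}. (if bb l then 1 else 0) * w l * Gk \<delta> K l k"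
  have "cmod ?S \<le> (\<Sum>l\<in>{1..L}. cmod ((if bb l then 1 else 0) * w l * Gk \<delta> K l k))"
    by (rule norm_sum)
  also have "\<dots> \<le> (\<Sum>l\<in>{1..L}. 1)"
    using assms(3,4) norm_Gk_le_1 by (intro sum_mono) (auto simp: norm_mult intro: mult_le_one)
  finally have le: "(cmod ?S)\<^sup>2 * P \<le> (real L)\<^sup>2 * P"
    using assms(1) by (intro mult_right_mono power_mono) auto
  have nonneg: "0 \<le> (cmod ?S)\<^sup>2 * P"
    using assms(1) by simp
  show "0 \<le> phasor_rate b P L \<delta> K bb k w"
    unfolding phasor_rate_def using nonneg assms(2) by simp
  show "phasor_rate b P L \<delta> K bb k w \<le> log b (1 + (real L)\<^sup>2 * P)"
    unfolding phasor_rate_def using nonneg le assms(2) by (subst log_le_cancel_iff) auto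
qed

lemma Rk_eq_phasor_rate:
  "Rk b P L d \<delta> K \<beta> \<theta> \<phi> k
     = phasor_rate b P L \<delta> K \<beta> k (\<lambda>l\<in>{1..L}. cis (\<phi> (l, k) + (\<theta> l - 2 * pi * real k * real (d l) / real K)))"
  unfolding Rk_def phasor_rate_def Hk_def
  by (intro arg_cong[where f = "\<lambda>z. log b (1 + (cmod z)\<^sup>2 * P)"] sum.cong refl)
     (simp add: cis_mult[symmetric] ac_simps)

lemma Rbar_eq_phasor_rate:
  "Rbar b P L \<delta> K \<beta> k = (\<integral>\<psi>. phasor_rate b P L \<delta> K \<beta> k (\<lambda>l\<in>{1..L}. cis (\<psi> l)) \<partial>theta_measure L)"
  unfolding Rbar_def by (simp add: phasor_rate_def)

lemma Rk_bounds:
  assumes "P \<ge> 0" "b > 1" "\<forall>l\<in>{1..L}. 0 \<le> \<delta> l \<and> \<delta> l \<le> 1"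
  shows "0 \<le> Rk b P L d \<delta> K \<beta> \<theta> \<phi> k" "Rk b P L d \<delta> K \<beta> \<theta> \<phi> k \<le> log b (1 + (real L)\<^sup>2 * P)"
  unfolding Rk_eq_phasor_rate by (rule phasor_rate_bounds; use assms in simp)+

lemma Rbar_bounds:
  assumes "P \<ge> 0" "b > 1" "\<forall>l\<in>{1..L}. 0 \<le> \<delta> l \<and> \<delta> l \<le> 1"
  shows "0 \<le> Rbar b P L \<delta> K \<beta> k" "Rbar b P L \<delta> K \<beta> k \<le> log b (1 + (real L)\<^sup>2 * P)"
proof -
  interpret prob_space "theta_measure L"
    by (rule prob_space_theta_measure)
  let ?f = "\<lambda>\<psi>. phasor_rate b P L \<delta> K \<beta> k (\<lambda>l\<in>{1..L}. cis (\<psi> l))"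
  have bounds: "0 \<le> ?f \<psi>" "?f \<psi> \<le> log b (1 + (real L)\<^sup>2 * P)" for \<psi>
    by (rule phasor_rate_bounds; use assms in simp)+
  have [measurable]: "?f \<in> borel_measurable (theta_measure L)"
    unfolding theta_measure_def by measurable
  have "integrable (theta_measure L) ?f"
    by (rule integrable_const_bound[where B = "log b (1 + (real L)\<^sup>2 * P)"]) (use bounds in simp, fact)
  then show "0 \<le> Rbar b P L \<delta> K \<beta> k" "Rbar b P L \<delta> K \<beta> k \<le> log b (1 + (real L)\<^sup>2 * P)"
    unfolding Rbar_eq_phasor_rate using bounds by (auto intro!: integral_ge_const integral_le_const)
qed

lemma integral_phi_measure_Rk:
  assumes "L \<ge> 1" "k < K"
  shows "(\<integral>\<phi>. Rk b P L d \<delta> K \<beta> \<theta> \<phi> k \<partial>phi_measure L K) = Rbar b P L \<delta> K \<beta> k"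
proof -
  define c where "c l = \<theta> l - 2 * pi * real k * real (d l) / real K" for l
  let ?T = "theta_measure L" and ?C = "PiM {1..L} (\<lambda>_. borel :: complex measure)"
  have reindex: "distr (phi_measure L K) ?T (\<lambda>\<phi>. \<lambda>l\<in>{1..L}. \<phi> (l, k)) = ?T"
    using distr_PiM_reindex[of "{1..L} \<times> {0..<K}" "\<lambda>_. unif2pi" "\<lambda>l. (l, k)" "{1..L}"] assms
    unfolding phi_measure_def theta_measure_def by (auto simp: inj_on_def prob_space_unif2pi)
  have "distr (phi_measure L K) ?C (\<lambda>\<phi>. \<lambda>l\<in>{1..L}. cis (\<phi> (l, k) + c l))
      = distr (distr (phi_measure L K) ?T (\<lambda>\<phi>. \<lambda>l\<in>{1..L}. \<phi> (l, k))) ?C (\<lambda>\<psi>. \<lambda>l\<in>{1..L}. cis (\<psi> l + c l))"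
    using assms unfolding phi_measure_def theta_measure_def
    by (subst distr_distr) (measurable, auto simp: comp_def intro!: distr_cong)
  also have "\<dots> = distr ?T ?C (\<lambda>\<psi>. \<lambda>l\<in>{1..L}. cis (\<psi> l))"
    unfolding reindex unfolding theta_measure_def
    by (rule distr_PiM_unif2pi_cis_shift) (use assms in auto)
  finally have law: "distr (phi_measure L K) ?C (\<lambda>\<phi>. \<lambda>l\<in>{1..L}. cis (\<phi> (l, k) + c l))
      = distr ?T ?C (\<lambda>\<psi>. \<lambda>l\<in>{1..L}. cis (\<psi> l))" .
  have "(\<integral>\<phi>. Rk b P L d \<delta> K \<beta> \<theta> \<phi> k \<partial>phi_measure L K)
      = (\<integral>w. phasor_rate b P L \<delta> K \<beta> k w \<partial>distr (phi_measure L K) ?C (\<lambda>\<phi>. \<lambda>l\<in>{1..L}. cis (\<phi> (l, k) + c l)))"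
    using assms unfolding Rk_eq_phasor_rate c_def phi_measure_def
    by (subst integral_distr) measurable
  also have "\<dots> = (\<integral>\<psi>. phasor_rate b P L \<delta> K \<beta> k (\<lambda>l\<in>{1..L}. cis (\<psi> l)) \<partial>?T)"
    unfolding law theta_measure_def by (subst integral_distr) measurable
  finally show ?thesis
    by (simp add: Rbar_eq_phasor_rate)
qed

lemma indep_vars_Rk:
  "prob_space.indep_vars (phi_measure L K) (\<lambda>_. borel) (\<lambda>k \<phi>. Rk b P L d \<delta> K \<beta> \<theta> \<phi> k) {..<K}"
proof -
  define c where "c k l = \<theta> l - 2 * pi * real k * real (d l) / real K" for k l
  define f where "f k \<rho> = phasor_rate b P L \<delta> K \<beta> k (\<lambda>l\<in>{1..L}. cis (\<rho> (l, k) + c k l))" for k \<rho>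
  have f: "f k \<in> borel_measurable (PiM ({1..L} \<times> {k}) (\<lambda>_. unif2pi))" for k
    unfolding f_def by measurable
  have "prob_space.indep_vars (phi_measure L K) (\<lambda>_. borel)
      (\<lambda>k \<phi>. f k (restrict \<phi> ({1..L} \<times> {k}))) {..<K}"
    unfolding phi_measure_def
    by (rule indep_vars_PiM_blocks[OF _ _ _ f]) (auto simp: prob_space_unif2pi disjoint_family_on_def)
  also have "(\<lambda>k \<phi>. f k (restrict \<phi> ({1..L} \<times> {k}))) = (\<lambda>k \<phi>. Rk b P L d \<delta> K \<beta> \<theta> \<phi> k)"
    unfolding f_def c_def Rk_eq_phasor_rate by (intro ext phasor_rate_cong) auto
  finally show ?thesis .
qed

definition rate_deviation ::
    "real \<Rightarrow> real \<Rightarrow> nat \<Rightarrow> (nat \<Rightarrow> nat) \<Rightarrow> (nat \<Rightarrow> real) \<Rightarrow> nat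
      \<Rightarrow> (nat \<Rightarrow> bool) \<Rightarrow> (nat \<Rightarrow> real) \<Rightarrow> (nat \<times> nat \<Rightarrow> real) \<Rightarrow> real" where
  "rate_deviation b P L d \<delta> K \<beta> \<theta> \<phi> = (\<Sum>k<K. Rk b P L d \<delta> K \<beta> \<theta> \<phi> k - Rbar b P L \<delta> K \<beta> k)"

lemma prob_phi_measure_rate_deviation_ge:
  assumes "L \<ge> 1" "P \<ge> 0" "b > 1" "\<forall>l\<in>{1..L}. 0 \<le> \<delta> l \<and> \<delta> l \<le> 1" "e > 0"
  shows "measure (phi_measure L K) {\<phi> \<in> space (phi_measure L K). e \<le> \<bar>rate_deviation b P L d \<delta> K \<beta> \<theta> \<phi>\<bar>}
           \<le> real K * (log b (1 + (real L)\<^sup>2 * P))\<^sup>2 / e\<^sup>2"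
proof -
  interpret prob_space "phi_measure L K"
    by (rule prob_space_phi_measure)
  let ?Y = "\<lambda>k \<phi>. Rk b P L d \<delta> K \<beta> \<theta> \<phi> k - Rbar b P L \<delta> K \<beta> k"
  have Rk: "indep_vars (\<lambda>_. borel) (\<lambda>k \<phi>. Rk b P L d \<delta> K \<beta> \<theta> \<phi> k) {..<K}"
    by (rule indep_vars_Rk)
  then have indep: "indep_vars (\<lambda>_. borel) ?Y {..<K}"
    by (rule indep_vars_compose2[where Y = "\<lambda>k x. x - Rbar b P L \<delta> K \<beta> k"]) simp
  have "\<bar>?Y k \<phi>\<bar> \<le> log b (1 + (real L)\<^sup>2 * P)" for k \<phi>
    using Rk_bounds[OF assms(2-4), of d K \<beta> \<theta> \<phi> k] Rbar_bounds[OF assms(2-4), of K \<beta> k] by linarith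
  moreover have "expectation (?Y k) = 0" if "k < K" for k
  proof -
    have [measurable]: "(\<lambda>\<phi>. Rk b P L d \<delta> K \<beta> \<theta> \<phi> k) \<in> borel_measurable (phi_measure L K)"
      using Rk that by (auto simp: indep_vars_def)
    have "integrable (phi_measure L K) (\<lambda>\<phi>. Rk b P L d \<delta> K \<beta> \<theta> \<phi> k)"
      by (rule integrable_const_bound[where B = "log b (1 + (real L)\<^sup>2 * P)"])
        (use Rk_bounds[OF assms(2-4)] in simp, fact)
    then show ?thesis
      using integral_phi_measure_Rk[OF assms(1) that] by (simp add: prob_space)
  qed
  ultimately show ?thesis
    using prob_abs_sum_indep_ge[OF finite_lessThan indep _ _ \<open>e > 0\<close>]
    by (simp add: rate_deviation_def)
qed

lemma measure_pair_measure_le_sections: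
  assumes "prob_space M" "prob_space N" "0 \<le> c"
    and sections: "\<And>x. x \<in> space M \<Longrightarrow> measure N (Pair x -` A) \<le> c"
  shows "measure (M \<Otimes>\<^sub>M N) A \<le> c"
proof (cases "A \<in> sets (M \<Otimes>\<^sub>M N)")
  case True
  interpret M: prob_space M by fact
  interpret N: prob_space N by fact
  interpret MN: prob_space "M \<Otimes>\<^sub>M N"
    by (rule prob_space_pair) unfold_locales
  have "emeasure (M \<Otimes>\<^sub>M N) A = (\<integral>\<^sup>+x. emeasure N (Pair x -` A) \<partial>M)"
    by (rule N.emeasure_pair_measure_alt[OF True])
  also have "\<dots> \<le> (\<integral>\<^sup>+x. ennreal c \<partial>M)"
    using sections by (intro nn_integral_mono) (simp add: N.emeasure_eq_measure ennreal_leI)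
  also have "\<dots> = ennreal c"
    by (simp add: M.emeasure_space_1)
  finally show ?thesis
    using \<open>0 \<le> c\<close> by (simp add: MN.emeasure_eq_measure)
qed (simp add: measure_notin_sets \<open>0 \<le> c\<close>)

lemma prob_joint_measure_rate_deviation_ge:
  assumes "L \<ge> 1" "P \<ge> 0" "b > 1" "\<forall>l\<in>{1..L}. 0 \<le> \<delta> l \<and> \<delta> l \<le> 1" "e > 0"
  shows "measure (joint_measure L pB K)
           {\<omega> \<in> space (joint_measure L pB K).
              e \<le> \<bar>rate_deviation b P L d \<delta> K (fst \<omega>) (fst (snd \<omega>)) (snd (snd \<omega>))\<bar>}
           \<le> real K * (log b (1 + (real L)\<^sup>2 * P))\<^sup>2 / e\<^sup>2"
    (is "measure _ ?A \<le> ?c")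
proof -
  have "Pair \<theta> -` Pair \<beta> -` ?A
      = {\<phi> \<in> space (phi_measure L K). e \<le> \<bar>rate_deviation b P L d \<delta> K \<beta> \<theta> \<phi>\<bar>}"
    if "\<beta> \<in> space (beta_measure L pB)" "\<theta> \<in> space (theta_measure L)" for \<beta> \<theta>
    using that by (auto simp: joint_measure_def space_pair_measure)
  then have sections: "measure (phi_measure L K) (Pair \<theta> -` Pair \<beta> -` ?A) \<le> ?c"
    if "\<beta> \<in> space (beta_measure L pB)" "\<theta> \<in> space (theta_measure L)" for \<beta> \<theta>
    using that prob_phi_measure_rate_deviation_ge[OF assms] by simp
  have "measure (beta_measure L pB \<Otimes>\<^sub>M (theta_measure L \<Otimes>\<^sub>M phi_measure L K)) ?A \<le> ?c"
  proof (rule measure_pair_measure_le_sections)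
    fix \<beta> assume "\<beta> \<in> space (beta_measure L pB)"
    show "measure (theta_measure L \<Otimes>\<^sub>M phi_measure L K) (Pair \<beta> -` ?A) \<le> ?c"
      by (rule measure_pair_measure_le_sections[OF prob_space_theta_measure prob_space_phi_measure])
        (use sections \<open>\<beta> \<in> space (beta_measure L pB)\<close> in auto)
  qed (simp_all add: prob_space_pair prob_space_beta_measure prob_space_theta_measure prob_space_phi_measure)
  then show ?thesis
    by (simp add: joint_measure_def)
qed

theorem proposition11:
  fixes L :: nat and P pB \<tau>max b \<epsilon> :: real and D :: int
    and d :: "nat \<Rightarrow> nat" and \<delta> \<tau> :: "nat \<Rightarrow> real"
  assumes "L \<ge> 1" and "P \<ge> 0" and "0 \<le> pB" and "pB \<le> 1"
    and "\<tau>max > 0" and "D \<ge> ceiling \<tau>max + 1"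
    and "\<forall>l\<in>{1..L}. 0 \<le> \<tau> l \<and> \<tau> l \<le> \<tau>max"
    and "\<forall>l\<in>{1..L}. \<tau> l = real (d l) + \<delta> l \<and> 0 \<le> \<delta> l \<and> \<delta> l < 1"
    and "b > 1"
    and "\<epsilon> > 0"
  shows "(\<lambda>K. measure (joint_measure L pB K)
            {\<omega> \<in> space (joint_measure L pB K).
               \<bar>(1 / (real K + of_int D)) *
                 (\<Sum>k<K. Rk b P L d \<delta> K (fst \<omega>) (fst (snd \<omega>)) (snd (snd \<omega>)) k
                          - Rbar b P L \<delta> K (fst \<omega>) k)\<bar> \<ge> \<epsilon>})
         \<longlonglongrightarrow> 0"
proof -
  define M where "M = (log b (1 + (real L)\<^sup>2 * P))\<^sup>2"
  have "0 < ceiling \<tau>max"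
    using assms(5) by simp
  then have "D > 0"
    using assms(6) by linarith
  then have scale: "\<epsilon> \<le> \<bar>1 / (real K + of_int D) * x\<bar> \<longleftrightarrow> \<epsilon> * (real K + of_int D) \<le> \<bar>x\<bar>" for K x
    by (simp add: abs_mult field_simps)
  have "\<forall>l\<in>{1..L}. 0 \<le> \<delta> l \<and> \<delta> l \<le> 1"
    using assms(8) by force
  then have bound: "measure (joint_measure L pB K)
      {\<omega> \<in> space (joint_measure L pB K).
         \<epsilon> * (real K + of_int D) \<le> \<bar>rate_deviation b P L d \<delta> K (fst \<omega>) (fst (snd \<omega>)) (snd (snd \<omega>))\<bar>}
      \<le> real K * M / (\<epsilon> * (real K + of_int D))\<^sup>2" for K
    unfolding M_def using \<open>D > 0\<close> assms(10)
    by (intro prob_joint_measure_rate_deviation_ge[OF assms(1,2,9)]) auto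
  have lim: "(\<lambda>K. real K * M / (\<epsilon> * (real K + of_int D))\<^sup>2) \<longlonglongrightarrow> 0"
    using assms(10) by real_asymp
  show ?thesis
    unfolding scale rate_deviation_def[symmetric]
    by (rule tendsto_sandwich[OF _ always_eventually tendsto_const lim]) (simp, intro allI bound)
qed

end
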